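(* Let $\alpha\in[0,1]$ and $$S=\{(c,\ell)\in[0,1]\times[0,2L] : c\le\alpha,\ \ell\le 2L(1-\alpha)\}.$$ Then $S$ is approachable in the game with payoff $m$: there is a strategy of the learner such that, for every strategy of the opponent, $d(\overline{m}_T,S)\to 0$ almost surely as $T\to\infty$.
   Context: Fix $n\ge1$, $L>0$ and calibration scores $s_{(1)}<\dots<s_{(n)}$ in $[0,L)$, with $s_{(0)}=0$, $s_{(n+1)}=L$. Let $\mathcal{A}=\{k/(n+1):k=0,\dots,n+1\}$ and $\mathcal{B}=\{k/(n+1):k=1,\dots,n+1\}$. For $a\in\mathcal{A}$, the length of the conformal set is $\mathrm{Leb}(C_a)=2s_{(\lceil (n+1)(1-a)\rceil)}$ (so $\mathrm{Leb}(C_0)=2L$ and $\mathrm{Leb}(C_1)=0$). The vector payoff is $m:\mathcal{A}\times\mathcal{B}\to\mathbb{R}^2$, $m(a,b)=(\mathbf{1}_{b\le a},\ \mathrm{Leb}(C_a))$, extended bilinearly to mixed actions by $m(\boldsymbol{p},\boldsymbol{q})=\sum_{a,b}p_aq_b\,m(a,b)$ for $\boldsymbol p\in\Delta(\mathcal{A})$, $\boldsymbol q\in\Delta(\mathcal{B})$. Repeated game: at each round $t\ge1$ the learner chooses $\boldsymbol p_t\in\Delta(\mathcal{A})$ and the opponent chooses $\boldsymbol q_t\in\Delta(\mathcal{B})$, both as functions of the past history; then $a_t\sim\boldsymbol p_t$ and $b_t\sim\boldsymbol q_t$ are drawn independently given the past. Write $\overline m_T=\frac1T\sum_{t=1}^T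 m(a_t,b_t)$, and $d(x,S)=\min_{c\in S}\|x-c\|$ for the Euclidean norm. *)

theory Defs
  imports "HOL-Probability.Probability"
begin

text \<open>Actions are encoded by their numerators: the learner's action a = k/(n+1)
  is encoded by k in {0..n+1}, the opponent's action b = j/(n+1) by j in {1..n+1}.\<close>

definition act_A :: "nat \<Rightarrow> nat set" where
  "act_A n = {0..n+1}"

definition act_B :: "nat \<Rightarrow> nat set" where
  "act_B n = {1..n+1}"

text \<open>Scores: s k stands for s_(k); s 0 = 0 and s (n+1) = L by convention.\<close>
definition valid_scores :: "nat \<Rightarrow> real \<Rightarrow> (nat \<Rightarrow> real) \<Rightarrow> bool" where
  "valid_scores n L s \<longleftrightarrow>
     s 0 = 0 \<and> s (n+1) = L \<and> strict_mono_on {1..n} s \<and>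
     (\<forall>k\<in>{1..n}. 0 \<le> s k \<and> s k < L)"

text \<open>Leb(C_a) = 2 s_(ceil((n+1)(1-a))) for a = k/(n+1).\<close>
definition leb_C :: "nat \<Rightarrow> (nat \<Rightarrow> real) \<Rightarrow> nat \<Rightarrow> real" where
  "leb_C n s k = 2 * s (nat \<lceil>real (n+1) * (1 - real k / real (n+1))\<rceil>)"

definition payoff :: "nat \<Rightarrow> (nat \<Rightarrow> real) \<Rightarrow> nat \<times> nat \<Rightarrow> real \<times> real" where
  "payoff n s ab =
     ((if real (snd ab) / real (n+1) \<le> real (fst ab) / real (n+1) then 1 else 0),
      leb_C n s (fst ab))"

text \<open>Average payoff over the first T rounds along a play \<omega> (round t+1 is \<omega> t).\<close>
definition avg_payoff :: "nat \<Rightarrow> (nat \<Rightarrow> real) \<Rightarrow> nat \<Rightarrow> (nat \<Rightarrow> nat \<times> nat) \<Rightarrow> real \<times> real" where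
  "avg_payoff n s T \<omega> = (1 / real T) *\<^sub>R (\<Sum>t<T. payoff n s (\<omega> t))"

text \<open>M is the law on the space of plays induced by learner strategy \<sigma> and opponent
  strategy \<tau>: at each round, given the history, the two actions are drawn
  independently from \<sigma> h and \<tau> h.\<close>
definition game_law ::
  "(nat \<Rightarrow> nat \<times> nat) measure \<Rightarrow> ((nat \<times> nat) list \<Rightarrow> nat pmf)
     \<Rightarrow> ((nat \<times> nat) list \<Rightarrow> nat pmf) \<Rightarrow> bool" where
  "game_law M \<sigma> \<tau> \<longleftrightarrow>
     prob_space M \<and>
     (\<forall>t. (\<lambda>\<omega>. \<omega> t) \<in> measurable M (count_space UNIV)) \<and>
     (\<forall>h. measure M {\<omega>\<in>space M. \<forall>t<length h. \<omega> t = h ! t} =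
          (\<Prod>t<length h. pmf (\<sigma> (take t h)) (fst (h ! t)) * pmf (\<tau> (take t h)) (snd (h ! t))))"

definition target_set :: "real \<Rightarrow> real \<Rightarrow> (real \<times> real) set" where
  "target_set L \<alpha> = {(c, l). 0 \<le> c \<and> c \<le> 1 \<and> 0 \<le> l \<and> l \<le> 2 * L \<and>
                              c \<le> \<alpha> \<and> l \<le> 2 * L * (1 - \<alpha>)}"

end

theory Submission
  imports Defs
begin

text \<open>The learner can approach the vertex (\<alpha>, 2L(1 - \<alpha>)) of S deterministically, whatever
  the opponent does: it only uses the action a = 1 (empty set, payoff (1, 0)) and the action
  a = 0 (whole interval, payoff (0, 2L)), and plays a = 1 exactly at the rounds t where
  \<lfloor>\<alpha>(t+1)\<rfloor> - \<lfloor>\<alpha>t\<rfloor> = 1.  After T rounds it has played a = 1 exactly \<lfloor>\<alpha>T\<rfloor> times, so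
  the average payoff is (q, 2L(1 - q)) with q = \<lfloor>\<alpha>T\<rfloor>/T, which tends to \<alpha>.  Randomness only enters
  through the fact that almost surely every realised action lies in the support of the
  mixed action prescribed by the strategies.\<close>

lemma AE_game_law_in_support:
  assumes "game_law M \<sigma> \<tau>"
  shows "AE \<omega> in M. \<forall>t. fst (\<omega> t) \<in> set_pmf (\<sigma> (map \<omega> [0..<t])) \<and>
                          snd (\<omega> t) \<in> set_pmf (\<tau> (map \<omega> [0..<t]))"
proof -
  interpret prob_space M
    using assms by (simp add: game_law_def)
  have coord_measurable[measurable]: "(\<lambda>\<omega>. \<omega> t) \<in> measurable M (count_space UNIV)" for t
    using assms by (simp add: game_law_def)
  define C where "C h = {\<omega>\<in>space M. \<forall>t<length h. \<omega> t = h ! t}" for h :: "(nat \<times> nat) list"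
  define step_prob where "step_prob h t =
    pmf (\<sigma> (take t h)) (fst (h ! t)) * pmf (\<tau> (take t h)) (snd (h ! t))" for h t
  define H where "H = {h. \<exists>t<length h. step_prob h t = 0}"
  have "C h \<in> sets M" for h
    unfolding C_def by measurable
  moreover have "prob (C h) = 0" if "h \<in> H" for h
    using assms that by (auto simp: game_law_def C_def H_def step_prob_def)
  ultimately have "AE \<omega> in M. \<forall>h\<in>H. \<omega> \<notin> C h"
    by (subst AE_ball_countable) (auto simp: prob_eq_0)
  then show ?thesis
    using AE_space
  proof eventually_elim
    case (elim \<omega>)
    show ?case
    proof (intro allI, rule ccontr)
      fix t
      assume "\<not> (fst (\<omega> t) \<in> set_pmf (\<sigma> (map \<omega> [0..<t])) \<and>
                 snd (\<omega> t) \<in> set_pmf (\<tau> (map \<omega> [0..<t])))"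
      moreover have "take t (map \<omega> [0..<Suc t]) = map \<omega> [0..<t]"
        by (simp add: take_map)
      ultimately have "step_prob (map \<omega> [0..<Suc t]) t = 0"
        by (auto simp: step_prob_def set_pmf_iff simp del: upt_Suc)
      then have "map \<omega> [0..<Suc t] \<in> H"
        unfolding H_def by (auto simp del: upt_Suc)
      moreover have "\<omega> \<in> C (map \<omega> [0..<Suc t])"
        using elim by (simp add: C_def del: upt_Suc)
      ultimately show False
        using elim by blast
    qed
  qed
qed

lemma payoff_full_set:
  assumes "valid_scores n L s" and "b \<in> act_B n"
  shows "payoff n s (0, b) = (0, 2 * L)"
proof -
  have "0 < real b / real (n + 1)"
    using assms(2) by (simp add: act_B_def)
  moreover have "nat \<lceil>real (n + 1)\<rceil> = n + 1"
    by (simp only: ceiling_of_nat nat_int)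
  ultimately show ?thesis
    using assms(1) by (simp add: payoff_def leb_C_def valid_scores_def)
qed

lemma payoff_empty_set:
  assumes "valid_scores n L s" and "b \<in> act_B n"
  shows "payoff n s (n + 1, b) = (1, 0)"
  using assms by (auto simp: payoff_def leb_C_def valid_scores_def act_B_def divide_right_mono)

definition floor_step :: "real \<Rightarrow> nat \<Rightarrow> real" where
  "floor_step \<alpha> t = \<lfloor>\<alpha> * real (Suc t)\<rfloor> - \<lfloor>\<alpha> * real t\<rfloor>"

lemma floor_step_0_or_1:
  assumes "0 \<le> \<alpha>" and "\<alpha> \<le> 1"
  shows "floor_step \<alpha> t = 0 \<or> floor_step \<alpha> t = 1"
proof -
  have "\<lfloor>\<alpha> * real t\<rfloor> \<le> \<lfloor>\<alpha> * real t + \<alpha>\<rfloor>" and "\<lfloor>\<alpha> * real t + \<alpha>\<rfloor> \<le> \<lfloor>\<alpha> * real t + 1\<rfloor>"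
    by (rule floor_mono, simp add: assms)+
  then show ?thesis
    by (auto simp: floor_step_def algebra_simps)
qed

lemma sum_floor_step: "(\<Sum>t<T. floor_step \<alpha> t) = \<lfloor>\<alpha> * real T\<rfloor>"
  using sum_lessThan_telescope[of "\<lambda>t. real_of_int \<lfloor>\<alpha> * real t\<rfloor>" T] by (simp add: floor_step_def)

lemma tendsto_floor_mult_div: "(\<lambda>T. \<lfloor>\<alpha> * real T\<rfloor> / real T) \<longlonglongrightarrow> \<alpha>"
proof (rule real_tendsto_sandwich)
  show "\<forall>\<^sub>F T in sequentially. \<alpha> - 1 / real T \<le> \<lfloor>\<alpha> * real T\<rfloor> / real T"
  proof (rule eventually_mono[OF eventually_gt_at_top[of 0]])
    fix T :: nat
    assume "0 < T"
    have "\<alpha> - 1 / real T = (\<alpha> * real T - 1) / real T"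
      using \<open>0 < T\<close> by (simp add: field_simps)
    also have "\<dots> \<le> \<lfloor>\<alpha> * real T\<rfloor> / real T"
      by (intro divide_right_mono) linarith+
    finally show "\<alpha> - 1 / real T \<le> \<lfloor>\<alpha> * real T\<rfloor> / real T" .
  qed
  show "\<forall>\<^sub>F T in sequentially. \<lfloor>\<alpha> * real T\<rfloor> / real T \<le> \<alpha>"
    using eventually_gt_at_top[of 0]
    by eventually_elim (simp add: field_simps)
  show "(\<lambda>T. \<alpha> - 1 / real T) \<longlonglongrightarrow> \<alpha>"
    using tendsto_diff[OF tendsto_const lim_const_over_n[of 1]] by simp
qed simp

definition floor_action :: "nat \<Rightarrow> real \<Rightarrow> nat \<Rightarrow> nat" where
  "floor_action n \<alpha> t = (if floor_step \<alpha> t = 1 then n + 1 else 0)"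

lemma payoff_floor_action:
  assumes "valid_scores n L s" and "0 \<le> \<alpha>" and "\<alpha> \<le> 1" and "b \<in> act_B n"
  shows "payoff n s (floor_action n \<alpha> t, b) = (floor_step \<alpha> t, 2 * L * (1 - floor_step \<alpha> t))"
  using floor_step_0_or_1[OF assms(2,3), of t] payoff_full_set[OF assms(1,4)]
    payoff_empty_set[OF assms(1,4)]
  by (auto simp: floor_action_def)

lemma avg_payoff_floor_play_tendsto:
  assumes "valid_scores n L s" and "0 \<le> \<alpha>" and "\<alpha> \<le> 1"
    and play: "\<And>t. fst (\<omega> t) = floor_action n \<alpha> t" "\<And>t. snd (\<omega> t) \<in> act_B n"
  shows "(\<lambda>T. avg_payoff n s T \<omega>) \<longlonglongrightarrow> (\<alpha>, 2 * L * (1 - \<alpha>))"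
proof -
  define q where "q T = \<lfloor>\<alpha> * real T\<rfloor> / real T" for T :: nat
  have "payoff n s (\<omega> t) = (floor_step \<alpha> t, 2 * L * (1 - floor_step \<alpha> t))" for t
    using payoff_floor_action[OF assms(1-3) play(2), of t] play(1)[of t] by (metis prod.collapse)
  then have payoff_sum: "(\<Sum>t<T. payoff n s (\<omega> t)) =
      (\<lfloor>\<alpha> * real T\<rfloor>, 2 * L * (real T - \<lfloor>\<alpha> * real T\<rfloor>))" for T
    by (intro prod_eqI) (simp_all add: fst_sum snd_sum sum_floor_step sum_subtractf
        right_diff_distrib flip: sum_distrib_left)
  have "(\<lambda>T. (q T, 2 * L * (1 - q T))) \<longlonglongrightarrow> (\<alpha>, 2 * L * (1 - \<alpha>))"
    unfolding q_def by (intro tendsto_intros tendsto_floor_mult_div)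
  moreover have "\<forall>\<^sub>F T in sequentially. (q T, 2 * L * (1 - q T)) = avg_payoff n s T \<omega>"
    using eventually_gt_at_top[of 0]
    by eventually_elim (simp add: avg_payoff_def payoff_sum q_def field_simps)
  ultimately show ?thesis
    by (rule Lim_transform_eventually)
qed

theorem lemma3:
  fixes n :: nat and L \<alpha> :: real and s :: "nat \<Rightarrow> real"
  assumes "n \<ge> 1" and "L > 0" and "valid_scores n L s"
    and "0 \<le> \<alpha>" and "\<alpha> \<le> 1"
  shows "\<exists>\<sigma>. (\<forall>h. set_pmf (\<sigma> h) \<subseteq> act_A n) \<and>
           (\<forall>\<tau> M. (\<forall>h. set_pmf (\<tau> h) \<subseteq> act_B n) \<longrightarrow> game_law M \<sigma> \<tau> \<longrightarrow>
              (AE \<omega> in M. (\<lambda>T. infdist (avg_payoff n s T \<omega>) (target_set L \<alpha>)) \<longlonglongrightarrow> 0))"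
proof (intro exI[of _ "\<lambda>h. return_pmf (floor_action n \<alpha> (length h))"] conjI allI impI)
  show "set_pmf (return_pmf (floor_action n \<alpha> (length h))) \<subseteq> act_A n" for h
    by (simp add: act_A_def floor_action_def)
  fix \<tau> M
  assume opponent: "\<forall>h. set_pmf (\<tau> h) \<subseteq> act_B n"
    and law: "game_law M (\<lambda>h. return_pmf (floor_action n \<alpha> (length h))) \<tau>"
  have vertex: "(\<alpha>, 2 * L * (1 - \<alpha>)) \<in> target_set L \<alpha>"
    using assms by (auto simp: target_set_def mult_le_cancel_left1)
  have "AE \<omega> in M. \<forall>t. fst (\<omega> t) = floor_action n \<alpha> t \<and> snd (\<omega> t) \<in> act_B n"
    using AE_game_law_in_support[OF law] by eventually_elim (use opponent in auto)
  then show "AE \<omega> in M. (\<lambda>T. infdist (avg_payoff n s T \<omega>) (target_set L \<alpha>)) \<longlonglongrightarrow> 0"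
  proof eventually_elim
    case (elim \<omega>)
    then have "(\<lambda>T. avg_payoff n s T \<omega>) \<longlonglongrightarrow> (\<alpha>, 2 * L * (1 - \<alpha>))"
      using avg_payoff_floor_play_tendsto[OF assms(3-5)] by blast
    then have "(\<lambda>T. infdist (avg_payoff n s T \<omega>) (target_set L \<alpha>)) \<longlonglongrightarrow>
        infdist (\<alpha>, 2 * L * (1 - \<alpha>)) (target_set L \<alpha>)"
      by (rule tendsto_infdist)
    then show ?case
      using vertex by simp
  qed
qed

end
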